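(* For $n\in\{0,1,\dots\}$ and $b,s\in\{0,\dots,n\}$, the diagonal matrix $\Gamma_{n,b,s}$ satisfies $$\Gamma_{n,b,s}=\mathrm{diag}(\lambda_{n,a_1,s},\dots,\lambda_{n,a_{2^b},s}).$$ In particular, for $b\ge1$, with $\mathbf{0}_{2^{b-1}}$ the zero vector of length $2^{b-1}$, $$\Gamma_{n,b,s}=\mathrm{diag}(\lambda_{n,a_1,s},\dots,\lambda_{n,a_{2^{b-1}},s},\mathbf{0}_{2^{b-1}})+\mathrm{diag}(\mathbf{0}_{2^{b-1}},\lambda_{n,a_1+1,s},\dots,\lambda_{n,a_{2^{b-1}}+1,s}).$$
   Context: With $(n)_t=n(n-1)\cdots(n-t+1)$ (empty product $1$), $\lambda_{n,b,s}=\sum_{t=0}^b\binom bt(-2)^t\frac{(s)_t}{(n)_t}$. Let $\Gamma=\mathrm{diag}(1,-1)$ and $I_2$ the $2\times2$ identity. The $2^b\times2^b$ matrices $\Gamma_{n,b,s}$ are defined by $\Gamma_{n,0,s}=1$ and, for $b\in\{1,\dots,n\}$, $\Gamma_{n,b,s}=\frac sn(\Gamma\otimes\Gamma_{n-1,b-1,s-1})+(1-\frac sn)(I_2\otimes\Gamma_{n-1,b-1,s})$ (terms with coefficient zero are omitted). The vectors $\mathbf{a}_b$ of length $2^b$ are defined by $\mathbf{a}_1=(0,1)$ and $\mathbf{a}_b=(\mathbf{a}_{b-1},\mathbf{a}_{b-1}+\mathbf{1}_{b-1})$ for $b\ge2$, where $\mathbf{1}_{b-1}$ is the all-ones vector of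 length $2^{b-1}$ (e.g. $\mathbf{a}_2=(0,1,1,2)$, $\mathbf{a}_3=(0,1,1,2,1,2,2,3)$); $a_k$ denotes the $k$-th entry of $\mathbf{a}_b$ for any $b$ with $2^b\ge k$ (this is well defined), and $a_1=0$. *)

theory Defs
  imports "Jordan_Normal_Form.Matrix"
begin

definition falling :: "nat \<Rightarrow> nat \<Rightarrow> real" where
  "falling n t = (\<Prod>i<t. (real n - real i))"

definition lam :: "nat \<Rightarrow> nat \<Rightarrow> nat \<Rightarrow> real" where
  "lam n b s = (\<Sum>t=0..b. real (b choose t) * (-2) ^ t * (falling s t / falling n t))"

definition kron :: "real mat \<Rightarrow> real mat \<Rightarrow> real mat" where
  "kron A B = mat (dim_row A * dim_row B) (dim_col A * dim_col B)
     (\<lambda>(i, j). A $$ (i div dim_row B, j div dim_col B) * B $$ (i mod dim_row B, j mod dim_col B))"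

definition GammaM :: "real mat" where
  "GammaM = mat 2 2 (\<lambda>(i, j). if i = j then (if i = 0 then 1 else -1) else 0)"

text \<open>Gamma_{n,b,s}; terms with coefficient zero are omitted.\<close>
fun Gam :: "nat \<Rightarrow> nat \<Rightarrow> nat \<Rightarrow> real mat" where
  "Gam n 0 s = mat 1 1 (\<lambda>_. 1)"
| "Gam n (Suc b) s =
     (if s = 0 then (1 - real s / real n) \<cdot>\<^sub>m kron (1\<^sub>m 2) (Gam (n - 1) b s)
      else if s = n then (real s / real n) \<cdot>\<^sub>m kron GammaM (Gam (n - 1) b (s - 1))
      else (real s / real n) \<cdot>\<^sub>m kron GammaM (Gam (n - 1) b (s - 1))
           + (1 - real s / real n) \<cdot>\<^sub>m kron (1\<^sub>m 2) (Gam (n - 1) b s))"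

text \<open>The vectors a_b (as lists); avec 0 = [0] makes avec 1 = [0,1].\<close>
fun avec :: "nat \<Rightarrow> nat list" where
  "avec 0 = [0]"
| "avec (Suc b) = avec b @ map Suc (avec b)"

text \<open>a_k (1-based), read from a_k itself (length 2^k >= k).\<close>
definition aent :: "nat \<Rightarrow> nat" where
  "aent k = avec k ! (k - 1)"

definition diagm :: "real list \<Rightarrow> real mat" where
  "diagm xs = mat (length xs) (length xs) (\<lambda>(i, j). if i = j then xs ! i else 0)"

end

theory Submission imports Defs begin

text \<open>A Kronecker product of diagonal matrices is diagonal, so
  \<open>\<Gamma>(n, b+1, s)\<close> is diagonal with entry \<open>\<plusminus> s/n \<lambda>(n-1, a, s-1) + (1 - s/n) \<lambda>(n-1, a, s)\<close>
  at position \<open>i\<close>, where \<open>a\<close> is entry \<open>i mod 2^b\<close> of \<open>a\<^sub>b\<close> and the sign is negative exactly in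
  the lower half. As the lower half of \<open>a\<^sub>b\<^sub>+\<^sub>1\<close> is the upper half plus one, two recurrences for
  \<open>\<lambda>\<close> remain. The one with sign \<open>+\<close> for \<open>\<lambda>(n, a, s)\<close> holds term by term, because
  \<open>s (s-1)\<^sub>t + (n-s) (s)\<^sub>t = (n-t) (s)\<^sub>t\<close>; the one with sign \<open>-\<close> for \<open>\<lambda>(n, a+1, s)\<close> follows from
  it and Pascal's rule, which gives \<open>\<lambda>(n, a+1, s) = \<lambda>(n, a, s) - 2 s/n \<lambda>(n-1, a, s-1)\<close>.\<close>

definition diag_mat :: "nat \<Rightarrow> (nat \<Rightarrow> real) \<Rightarrow> real mat" where
  "diag_mat m f = mat m m (\<lambda>(i, j). if i = j then f i else 0)"

lemma diagm_eq_diag_mat: "diagm xs = diag_mat (length xs) (\<lambda>i. xs ! i)"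
  by (simp add: diagm_def diag_mat_def)

lemma kron_diag_mat:
  assumes "m > 0"
  shows "kron (diag_mat k c) (diag_mat m g) = diag_mat (k * m) (\<lambda>i. c (i div m) * g (i mod m))"
proof -
  have "i div m \<noteq> j div m \<or> i mod m \<noteq> j mod m" if "i \<noteq> j" for i j
    using that by (metis div_mult_mod_eq)
  moreover have "i div m < k" if "i < k * m" for i
    using that by (simp add: less_mult_imp_div_less)
  ultimately show ?thesis
    using assms unfolding kron_def diag_mat_def by (intro eq_matI) auto
qed

lemma diag_mat_eqI: "m = m' \<Longrightarrow> (\<And>i. i < m \<Longrightarrow> f i = g i) \<Longrightarrow> diag_mat m f = diag_mat m' g"
  unfolding diag_mat_def by (intro eq_matI) auto

lemma smult_diag_mat: "c \<cdot>\<^sub>m diag_mat m f = diag_mat m (\<lambda>i. c * f i)"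
  unfolding diag_mat_def by (intro eq_matI) auto

lemma add_diag_mat: "diag_mat m f + diag_mat m g = diag_mat m (\<lambda>i. f i + g i)"
  unfolding diag_mat_def by (intro eq_matI) auto

lemma one_mat_eq_diag_mat: "(1\<^sub>m k :: real mat) = diag_mat k (\<lambda>_. 1)"
  by (auto simp: diag_mat_def)

lemma GammaM_eq_diag_mat: "GammaM = diag_mat 2 (\<lambda>i. if i = 0 then 1 else -1)"
  by (simp add: GammaM_def diag_mat_def)

lemma length_avec [simp]: "length (avec b) = 2 ^ b"
  by (induction b) auto

lemma avec_nth_le: "i < 2 ^ b \<Longrightarrow> avec b ! i \<le> b"
proof (induction b arbitrary: i)
  case (Suc b)
  show ?case
  proof (cases "i < 2 ^ b")
    case True
    then show ?thesis using Suc.IH[of i] by (simp add: nth_append)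
  next
    case False
    with Suc.prems have "i - 2 ^ b < 2 ^ b" by simp
    then show ?thesis using False Suc.IH[of "i - 2 ^ b"] by (simp add: nth_append)
  qed
qed simp

lemma avec_nth_mono: "m \<le> b \<Longrightarrow> i < 2 ^ m \<Longrightarrow> avec b ! i = avec m ! i"
proof (induction b)
  case (Suc b)
  show ?case
  proof (cases "m = Suc b")
    case False
    with Suc.prems have "m \<le> b" by simp
    with Suc.prems have "i < 2 ^ b"
      by (meson less_le_trans one_le_numeral power_increasing)
    with \<open>m \<le> b\<close> show ?thesis using Suc by (simp add: nth_append)
  qed simp
qed simp

lemma aent_Suc: "i < 2 ^ b \<Longrightarrow> aent (Suc i) = avec b ! i"
proof -
  assume "i < 2 ^ b"
  moreover have "i < 2 ^ Suc i"
    using less_exp[of "Suc i"] by simp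
  ultimately have "i < 2 ^ min (Suc i) b"
    by (simp add: min_def)
  then show ?thesis
    unfolding aent_def
    using avec_nth_mono[of "min (Suc i) b" "Suc i" i] avec_nth_mono[of "min (Suc i) b" b i] by simp
qed

lemma map_aent_upt: "map (\<lambda>k. f (aent k)) [1..<2 ^ b + 1] = map (\<lambda>i. f (avec b ! i)) [0..<2 ^ b]"
proof -
  have "[1..<2 ^ b + 1] = map Suc [0..<2 ^ b]"
    by (simp add: map_Suc_upt)
  then show ?thesis by (simp add: aent_Suc)
qed

lemma falling_0 [simp]: "falling m 0 = 1"
  by (simp add: falling_def)

lemma falling_Suc: "falling m (Suc t) = falling m t * (real m - real t)"
  by (simp add: falling_def)

lemma falling_Suc_left: "falling m (Suc t) = real m * falling (m - 1) t"
  unfolding falling_def prod.lessThan_Suc_shift by (cases m) (simp_all add: algebra_simps)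

lemma falling_pos: "t \<le> m \<Longrightarrow> falling m t > 0"
  unfolding falling_def by (intro prod_pos) auto

lemma falling_ratio_recurrence:
  assumes "t < n"
  shows "falling s t / falling n t
    = real s / real n * (falling (s - 1) t / falling (n - 1) t)
      + (1 - real s / real n) * (falling s t / falling (n - 1) t)"
proof (cases "s = 0")
  case True
  then show ?thesis
    by (cases t) (simp_all add: falling_Suc_left)
next
  case False
  have s_step: "real s * falling (s - 1) t = falling s t * (real s - real t)"
    using falling_Suc[of s t] falling_Suc_left[of s t] by simp
  have n_step: "real n * falling (n - 1) t = falling n t * (real n - real t)"
    using falling_Suc[of n t] falling_Suc_left[of n t] by simp
  have pos: "falling (n - 1) t > 0" "real n - real t > 0"
    using assms by (auto intro: falling_pos)
  have "real s / real n * (falling (s - 1) t / falling (n - 1) t)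
          + (1 - real s / real n) * (falling s t / falling (n - 1) t)
      = (real s * falling (s - 1) t + (real n - real s) * falling s t) / (real n * falling (n - 1) t)"
    using pos by (simp add: field_simps)
  also have "\<dots> = falling s t * (real n - real t) / (falling n t * (real n - real t))"
    unfolding s_step n_step by (simp add: algebra_simps)
  also have "\<dots> = falling s t / falling n t"
    using pos by simp
  finally show ?thesis ..
qed

lemma lam_eq_sum_atMost:
  "a \<le> N \<Longrightarrow> lam n a s = (\<Sum>t\<le>N. real (a choose t) * (-2) ^ t * (falling s t / falling n t))"
  unfolding lam_def atLeast0AtMost by (rule sum.mono_neutral_left) auto

lemma lam_recurrence:
  assumes "a < n"
  shows "lam n a s = real s / real n * lam (n - 1) a (s - 1) + (1 - real s / real n) * lam (n - 1) a s"
  unfolding lam_def sum_distrib_left sum.distrib[symmetric]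
proof (rule sum.cong[OF refl])
  fix t assume "t \<in> {0..a}"
  with assms have "t < n" by simp
  then show "real (a choose t) * (-2) ^ t * (falling s t / falling n t)
    = real s / real n * (real (a choose t) * (-2) ^ t * (falling (s - 1) t / falling (n - 1) t))
      + (1 - real s / real n) * (real (a choose t) * (-2) ^ t * (falling s t / falling (n - 1) t))"
    by (subst falling_ratio_recurrence) (simp_all add: algebra_simps)
qed

lemma lam_Suc: "lam n (Suc a) s = lam n a s - 2 * (real s / real n) * lam (n - 1) a (s - 1)"
proof -
  define h where "h b t = real (b choose t) * (-2) ^ t * (falling s t / falling n t)" for b t
  define d where "d t = real (a choose t) * (-2) ^ Suc t * (falling s (Suc t) / falling n (Suc t))" for t
  have h_Suc_Suc: "h (Suc a) (Suc t) = h a (Suc t) + d t" for t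
    unfolding h_def d_def binomial_Suc_Suc of_nat_add by (simp add: algebra_simps)
  have "lam n (Suc a) s = h (Suc a) 0 + (\<Sum>t\<le>a. h (Suc a) (Suc t))"
    unfolding h_def lam_eq_sum_atMost[OF order_refl] by (rule sum.atMost_Suc_shift)
  also have "\<dots> = (h a 0 + (\<Sum>t\<le>a. h a (Suc t))) + (\<Sum>t\<le>a. d t)"
    by (simp add: h_Suc_Suc sum.distrib) (simp add: h_def)
  also have "h a 0 + (\<Sum>t\<le>a. h a (Suc t)) = lam n a s"
    using sum.atMost_Suc_shift[of "h a" a] lam_eq_sum_atMost[of a "Suc a" n s] unfolding h_def by simp
  also have "(\<Sum>t\<le>a. d t) = - 2 * (real s / real n) * lam (n - 1) a (s - 1)"
    unfolding d_def falling_Suc_left lam_def atLeast0AtMost sum_distrib_left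
    by (rule sum.cong) (simp_all add: algebra_simps)
  finally show ?thesis by simp
qed

lemma lam_Suc_recurrence:
  assumes "a < n"
  shows "lam n (Suc a) s = - (real s / real n) * lam (n - 1) a (s - 1) + (1 - real s / real n) * lam (n - 1) a s"
  using lam_Suc[of n a s] lam_recurrence[OF assms, of s] by simp

lemma lam_avec_Suc_recurrence:
  assumes "Suc b \<le> n" "i < 2 * 2 ^ b"
  shows "lam n (avec (Suc b) ! i) s
    = real s / real n * (if i div 2 ^ b = 0 then 1 else -1) * lam (n - 1) (avec b ! (i mod 2 ^ b)) (s - 1)
      + (1 - real s / real n) * lam (n - 1) (avec b ! (i mod 2 ^ b)) s"
proof -
  define a where "a = avec b ! (i mod 2 ^ b)"
  have "a < n"
    using avec_nth_le[of "i mod 2 ^ b" b] assms(1) by (simp add: a_def)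
  show ?thesis
  proof (cases "i < 2 ^ b")
    case True
    then have "avec (Suc b) ! i = a" "i div 2 ^ b = 0" "i mod 2 ^ b = i"
      by (simp_all add: a_def nth_append)
    then show ?thesis using lam_recurrence[OF \<open>a < n\<close>] by (simp add: a_def)
  next
    case False
    with assms(2) have "i div 2 ^ b = 1" "i mod 2 ^ b = i - 2 ^ b" "avec (Suc b) ! i = Suc a"
      by (simp_all add: le_div_geq le_mod_geq a_def nth_append)
    then show ?thesis using lam_Suc_recurrence[OF \<open>a < n\<close>] by (simp add: a_def)
  qed
qed

lemma Gam_eq_diag_mat:
  "b \<le> n \<Longrightarrow> s \<le> n \<Longrightarrow> Gam n b s = diag_mat (2 ^ b) (\<lambda>i. lam n (avec b ! i) s)"
proof (induction b arbitrary: n s)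
  case 0
  have "lam n 0 s = 1" by (simp add: lam_def)
  then show ?case by (intro eq_matI) (auto simp: diag_mat_def)
next
  case (Suc b)
  define E where "E s' = diag_mat (2 ^ b) (\<lambda>i. lam (n - 1) (avec b ! i) s')" for s'
  have Gamma_kron: "kron GammaM (E s') = diag_mat (2 * 2 ^ b)
      (\<lambda>i. (if i div 2 ^ b = 0 then 1 else -1) * lam (n - 1) (avec b ! (i mod 2 ^ b)) s')" for s'
    unfolding GammaM_eq_diag_mat E_def by (rule kron_diag_mat) simp
  have one_kron: "kron (1\<^sub>m 2) (E s') = diag_mat (2 * 2 ^ b) (\<lambda>i. lam (n - 1) (avec b ! (i mod 2 ^ b)) s')" for s'
    unfolding one_mat_eq_diag_mat E_def by (subst kron_diag_mat) simp_all
  have IH: "Gam (n - 1) b s' = E s'" if "s' \<le> n - 1" for s'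
    unfolding E_def using Suc that by (intro Suc.IH) auto
  have "n > 0" using Suc.prems by simp
  note entries = lam_avec_Suc_recurrence[OF Suc.prems(1)]
  consider "s = 0" | "s = n" | "0 < s" "s < n"
    using Suc.prems by linarith
  then show ?case
  proof cases
    case 1
    then have "Gam n (Suc b) s = diag_mat (2 ^ Suc b) (\<lambda>i. lam (n - 1) (avec b ! (i mod 2 ^ b)) s)"
      using IH by (simp add: one_kron smult_diag_mat)
    also have "\<dots> = diag_mat (2 ^ Suc b) (\<lambda>i. lam n (avec (Suc b) ! i) s)"
      using 1 by (intro diag_mat_eqI refl) (subst entries; simp)
    finally show ?thesis .
  next
    case 2
    then have "Gam n (Suc b) s = diag_mat (2 ^ Suc b)
        (\<lambda>i. (if i div 2 ^ b = 0 then 1 else -1) * lam (n - 1) (avec b ! (i mod 2 ^ b)) (s - 1))"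
      using IH \<open>n > 0\<close> by (simp add: Gamma_kron smult_diag_mat)
    also have "\<dots> = diag_mat (2 ^ Suc b) (\<lambda>i. lam n (avec (Suc b) ! i) s)"
      using 2 \<open>n > 0\<close> by (intro diag_mat_eqI refl) (subst entries; simp)
    finally show ?thesis .
  next
    case 3
    then have "Gam n (Suc b) s = diag_mat (2 ^ Suc b)
        (\<lambda>i. real s / real n * ((if i div 2 ^ b = 0 then 1 else -1) * lam (n - 1) (avec b ! (i mod 2 ^ b)) (s - 1))
          + (1 - real s / real n) * lam (n - 1) (avec b ! (i mod 2 ^ b)) s)"
      using IH by (simp add: Gamma_kron one_kron smult_diag_mat add_diag_mat)
    also have "\<dots> = diag_mat (2 ^ Suc b) (\<lambda>i. lam n (avec (Suc b) ! i) s)"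
      by (intro diag_mat_eqI refl) (subst entries; simp)
    finally show ?thesis .
  qed
qed

theorem lemma4p1:
  fixes n b s :: nat
  assumes "b \<le> n" and "s \<le> n"
  shows "Gam n b s = diagm (map (\<lambda>k. lam n (aent k) s) [1..<2 ^ b + 1])
    \<and> (b \<ge> 1 \<longrightarrow>
        Gam n b s =
          diagm (map (\<lambda>k. lam n (aent k) s) [1..<2 ^ (b - 1) + 1] @ replicate (2 ^ (b - 1)) 0)
        + diagm (replicate (2 ^ (b - 1)) 0 @ map (\<lambda>k. lam n (aent k + 1) s) [1..<2 ^ (b - 1) + 1]))"
proof (intro conjI impI)
  show "Gam n b s = diagm (map (\<lambda>k. lam n (aent k) s) [1..<2 ^ b + 1])"
    unfolding Gam_eq_diag_mat[OF assms] map_aent_upt[of "\<lambda>a. lam n a s"] diagm_eq_diag_mat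
    by (intro diag_mat_eqI) simp_all
  assume "b \<ge> 1"
  then obtain c where b: "b = Suc c" by (cases b) auto
  show "Gam n b s =
          diagm (map (\<lambda>k. lam n (aent k) s) [1..<2 ^ (b - 1) + 1] @ replicate (2 ^ (b - 1)) 0)
        + diagm (replicate (2 ^ (b - 1)) 0 @ map (\<lambda>k. lam n (aent k + 1) s) [1..<2 ^ (b - 1) + 1])"
    unfolding Gam_eq_diag_mat[OF assms] map_aent_upt[of "\<lambda>a. lam n a s"]
      map_aent_upt[of "\<lambda>a. lam n (a + 1) s"] diagm_eq_diag_mat
    unfolding b by (simp add: add_diag_mat) (intro diag_mat_eqI; auto simp: nth_append)
qed

end
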